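(* Let $s=1$, $d=2$ with basis $|+\rangle,|-\rangle$ and shift vectors $v_+=+1$, $v_-=-1$. Let $H=\frac1{\sqrt2}\begin{pmatrix}1&1\\1&-1\end{pmatrix}$, $\sigma_z=\mathrm{diag}(1,-1)$, and for $\varphi\in[-\pi,\pi)$ let $H_\varphi=e^{i\varphi\sigma_z}H$. Let $\mu$ be a Borel probability measure on $[-\pi,\pi)$ and let $\nu$ be the law of $H_\varphi$ when $\varphi\sim\mu$. Put $r_n=\big|\int e^{in\varphi}\mu(d\varphi)\big|$. If $r_1<1$ and $r_2<1$, then for the associated walk $\mathbf W$, $\mathbf W^2$ is strictly contractive on $\{\mathbb 1\}^\perp\subset\mathcal T$.
   Context: General setting: for a lattice dimension $s$, internal dimension $d$, shift vectors $v_1,\dots,v_d\in\mathbb Z^s$ and a Borel probability measure $\nu$ on $\mathcal U(d)$, put $\widetilde U=\int U\,\nu(dU)$, $T(B)=\int U^*BU\,\nu(dU)$. $\mathcal T$ denotes the Hilbert space of (a.e.-classes of) measurable functions $A:[0,2\pi)^s\to M_d(\mathbb C)$ with inner product $\langle A,B\rangle=(2\pi)^{-s}\int d^sp\,\frac1d\mathrm{tr}(A(p)^*B(p))$, norm $\|A\|=\langle A,A\rangle^{1/2}$ (momentum representation of translation-invariant operators on $\ell^2(\mathbb Z^s)\otimes\mathbb C^d$). $\mathbb 1$ is the constant identity function; $A_0=(2\pi)^{-s}\int A(p)d^sp$; $S(p)=\mathrm{diag}(e^{iv_1\cdot p},\dots,e^{iv_d\cdot p})$. The walk with shift $|x\otimes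 i\rangle\mapsto|x+v_i\otimes i\rangle$ and coins i.i.d. in space and time with law $\nu$ acts on $\mathcal T$ by $\mathbf W(A)(p)=S(p)^*\big[T(A_0)+\widetilde U^*(A(p)-A_0)\widetilde U\big]S(p)$. A bounded map $\mathbf V$ on $\mathcal T$ is strictly contractive on $\{\mathbb 1\}^\perp$ if there is $c<1$ with $\|\mathbf V(A)\|\le c\|A\|$ for all $A\in\mathcal T$ with $\langle\mathbb 1,A\rangle=0$. *)

theory Defs
  imports "HOL-Analysis.Analysis" "HOL-Probability.Probability"
begin

text \<open>Setting s = 1, d = 2. Matrices are complex 2x2 matrices (complex ^ 2 ^ 2);
  index 1 :: 2 is the basis vector |+>, index 2 :: 2 is |->.\<close>

type_synonym cmat = "complex ^ 2 ^ 2"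

definition adj :: "cmat \<Rightarrow> cmat" where
  "adj A = (\<chi> i j. cnj (A $ j $ i))"

definition mtrace :: "cmat \<Rightarrow> complex" where
  "mtrace A = (\<Sum>i\<in>UNIV. A $ i $ i)"

definition idm :: cmat where
  "idm = (\<chi> i j. if i = j then 1 else 0)"

definition Had :: cmat where
  "Had = (\<chi> i j. (if i = 2 \<and> j = 2 then -1 else 1) / complex_of_real (sqrt 2))"

definition sigz :: cmat where
  "sigz = (\<chi> i j. if i = j then (if i = 1 then 1 else -1) else 0)"

definition Hphi :: "real \<Rightarrow> cmat" where
  "Hphi \<phi> = (\<chi> i j. if i = j then cis (\<phi> * Re (sigz $ i $ i)) else 0) ** Had"

definition shiftv :: "2 \<Rightarrow> real" where
  "shiftv i = (if i = 1 then 1 else -1)"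

definition Smat :: "real \<Rightarrow> cmat" where
  "Smat p = (\<chi> i j. if i = j then cis (shiftv i * p) else 0)"

definition Uavg :: "cmat measure \<Rightarrow> cmat" where
  "Uavg \<nu> = (\<chi> i j. \<integral>U. U $ i $ j \<partial>\<nu>)"

definition Tch :: "cmat measure \<Rightarrow> cmat \<Rightarrow> cmat" where
  "Tch \<nu> B = (\<chi> i j. \<integral>U. (adj U ** B ** U) $ i $ j \<partial>\<nu>)"

text \<open>The space \<T>: functions [0,2pi) -> M_2(C), represented by Borel measurable
  functions on the reals whose values on [0,2pi) matter; square integrability.\<close>
definition inT :: "(real \<Rightarrow> cmat) \<Rightarrow> bool" where
  "inT A \<longleftrightarrow> (\<forall>i j. (\<lambda>p. A p $ i $ j) \<in> borel_measurable borel \<and>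
      set_integrable lborel {0..<2*pi} (\<lambda>p. (cmod (A p $ i $ j))\<^sup>2))"

definition Tinner :: "(real \<Rightarrow> cmat) \<Rightarrow> (real \<Rightarrow> cmat) \<Rightarrow> complex" where
  "Tinner A B = (1 / (2*pi)) *
     (LINT p:{0..<2*pi}|lborel. (1/2) * mtrace (adj (A p) ** B p))"

definition Tnorm :: "(real \<Rightarrow> cmat) \<Rightarrow> real" where
  "Tnorm A = sqrt (Re (Tinner A A))"

definition Tone :: "real \<Rightarrow> cmat" where
  "Tone = (\<lambda>p. idm)"

definition zero_mode :: "(real \<Rightarrow> cmat) \<Rightarrow> cmat" where
  "zero_mode A = (\<chi> i j. (1 / (2*pi)) * (LINT p:{0..<2*pi}|lborel. A p $ i $ j))"

definition Wop :: "cmat measure \<Rightarrow> (real \<Rightarrow> cmat) \<Rightarrow> (real \<Rightarrow> cmat)" where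
  "Wop \<nu> A = (\<lambda>p. adj (Smat p) **
      (Tch \<nu> (zero_mode A) + adj (Uavg \<nu>) ** (A p - zero_mode A) ** Uavg \<nu>) ** Smat p)"

definition strictly_contractive_perp :: "((real \<Rightarrow> cmat) \<Rightarrow> (real \<Rightarrow> cmat)) \<Rightarrow> bool" where
  "strictly_contractive_perp V \<longleftrightarrow>
     (\<exists>c<1. \<forall>A. inT A \<longrightarrow> Tinner Tone A = 0 \<longrightarrow> Tnorm (V A) \<le> c * Tnorm A)"

end

theory Submission
  imports Defs
begin

text \<open>
  Split \<open>A \<in> \<T>\<close> into its zero mode \<open>A\<^sub>0\<close> and its fluctuation \<open>A - A\<^sub>0\<close>, which are
  orthogonal. One step of the walk replaces \<open>A\<^sub>0\<close> by \<open>T(A\<^sub>0)\<close>, conjugates the fluctuation by the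
  mean coin, and then conjugates everything by the shift \<open>S(p)\<close>. For the coins \<open>H\<^sub>\<phi>\<close> the mean
  coin is \<open>diag(m\<^sub>1, cnj m\<^sub>1) H\<close> with \<open>m\<^sub>n = \<integral> e\<^sup>i\<^sup>n\<^sup>\<phi> d\<mu>\<close>, so fluctuations shrink by
  \<open>r\<^sub>1\<^sup>4\<close> in squared norm, and \<open>T(B) = H D(B) H\<close> where \<open>D\<close> multiplies the off-diagonal entries by
  \<open>cnj m\<^sub>2, m\<^sub>2\<close>. The diagonal of a traceless \<open>A\<^sub>0\<close> is not damped by \<open>T\<close>, but \<open>H\<close> moves it
  off the diagonal, where the shift turns it into a nonconstant Fourier mode, i.e. into
  fluctuation; the second step then damps it by \<open>r\<^sub>1\<^sup>4\<close>. Altogether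
  \<open>\<parallel>W\<^sup>2 A\<parallel>\<^sup>2 \<le> max(r\<^sub>1\<^sup>4, r\<^sub>2\<^sup>2) \<parallel>A\<parallel>\<^sup>2\<close> for \<open>A \<perp> \<one>\<close>.
\<close>

section \<open>Means over the period\<close>

definition sqint :: "(real \<Rightarrow> complex) \<Rightarrow> bool" where
  "sqint f \<longleftrightarrow> f \<in> borel_measurable borel \<and> set_integrable lborel {0..<2*pi} (\<lambda>p. (cmod (f p))\<^sup>2)"

definition mean :: "(real \<Rightarrow> complex) \<Rightarrow> complex" where
  "mean f = complex_of_real (1/(2*pi)) * (LINT p:{0..<2*pi}|lborel. f p)"

definition rmean :: "(real \<Rightarrow> real) \<Rightarrow> real" where
  "rmean f = (1/(2*pi)) * (LINT p:{0..<2*pi}|lborel. f p)"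

lemma set_integrable_const_period:
  "set_integrable lborel {0..<2*pi} (\<lambda>_. c :: 'a::{banach, second_countable_topology})"
  unfolding set_integrable_def
  by (intro integrable_scaleR_left integrable_real_indicator) auto

lemma sqint_integrable:
  assumes "sqint f"
  shows "set_integrable lborel {0..<2*pi} f"
proof (rule set_integrable_bound[where f="\<lambda>p. 1 + (cmod (f p))\<^sup>2"])
  show "set_integrable lborel {0..<2*pi} (\<lambda>p. 1 + (cmod (f p))\<^sup>2)"
    using assms unfolding sqint_def by (intro set_integral_add set_integrable_const_period) auto
  show "set_borel_measurable lborel {0..<2*pi} f"
    using assms unfolding sqint_def set_borel_measurable_def by auto
  have "x \<le> 1 + x\<^sup>2" for x :: real
    using sum_power2_ge_zero[of "x - 1/2" 0] by (simp add: power2_eq_square algebra_simps)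
  then show "AE x in lborel. x \<in> {0..<2*pi} \<longrightarrow> norm (f x) \<le> norm (1 + (cmod (f x))\<^sup>2)"
    by (intro AE_I2) simp
qed

lemma sqint_lin:
  assumes "sqint f" "sqint g"
  shows "sqint (\<lambda>p. a * f p + b * g p)"
  unfolding sqint_def
proof
  have mf: "f \<in> borel_measurable borel" and mg: "g \<in> borel_measurable borel"
    using assms unfolding sqint_def by auto
  then show "(\<lambda>p. a * f p + b * g p) \<in> borel_measurable borel" by measurable
  have bound: "(cmod (a*x + b*y))\<^sup>2 \<le> 2*(cmod a)\<^sup>2*(cmod x)\<^sup>2 + 2*(cmod b)\<^sup>2*(cmod y)\<^sup>2" for x y
    using norm_triangle_le[OF order.refl, of "a*x" "b*y"] sum_power2_ge_zero[of 0 0]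
      power_mono[OF norm_triangle_ineq[of "a*x" "b*y"], of 2]
      sum_power2_ge_zero[of "cmod a * cmod x - cmod b * cmod y" 0]
    by (simp add: norm_mult power2_eq_square algebra_simps)
  show "set_integrable lborel {0..<2*pi} (\<lambda>p. (cmod (a * f p + b * g p))\<^sup>2)"
  proof (rule set_integrable_bound[where f="\<lambda>p. 2*(cmod a)\<^sup>2*(cmod (f p))\<^sup>2 + 2*(cmod b)\<^sup>2*(cmod (g p))\<^sup>2"])
    show "set_integrable lborel {0..<2*pi} (\<lambda>p. 2*(cmod a)\<^sup>2*(cmod (f p))\<^sup>2 + 2*(cmod b)\<^sup>2*(cmod (g p))\<^sup>2)"
      using assms unfolding sqint_def by (intro set_integral_add set_integrable_mult_right) auto
    show "set_borel_measurable lborel {0..<2*pi} (\<lambda>p. (cmod (a * f p + b * g p))\<^sup>2)"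
      unfolding set_borel_measurable_def using mf mg by measurable
    show "AE x in lborel. x \<in> {0..<2*pi} \<longrightarrow>
        norm ((cmod (a * f x + b * g x))\<^sup>2) \<le> norm (2*(cmod a)\<^sup>2*(cmod (f x))\<^sup>2 + 2*(cmod b)\<^sup>2*(cmod (g x))\<^sup>2)"
      using bound by (intro AE_I2) auto
  qed
qed

lemma sqint_const: "sqint (\<lambda>_. c)"
  unfolding sqint_def by (auto intro: set_integrable_const_period)

lemma sqint_add: "sqint f \<Longrightarrow> sqint g \<Longrightarrow> sqint (\<lambda>p. f p + g p)"
  using sqint_lin[of f g 1 1] by simp

lemma sqint_cmult: "sqint f \<Longrightarrow> sqint (\<lambda>p. a * f p)"
  using sqint_lin[of f f a 0] by simp

lemma sqint_unimodular_mult: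
  assumes "sqint f" "u \<in> borel_measurable borel" "\<And>p. cmod (u p) = 1"
  shows "sqint (\<lambda>p. u p * f p)"
  using assms unfolding sqint_def by (auto simp: norm_mult)

lemma mean_lin:
  assumes "sqint f" "sqint g"
  shows "mean (\<lambda>p. a * f p + b * g p) = a * mean f + b * mean g"
  using sqint_integrable[OF assms(1)] sqint_integrable[OF assms(2)] unfolding mean_def
  by (subst set_integral_add) (auto simp: algebra_simps)

lemma mean_add: "sqint f \<Longrightarrow> sqint g \<Longrightarrow> mean (\<lambda>p. f p + g p) = mean f + mean g"
  using mean_lin[of f g 1 1] by simp

lemma mean_cmult: "mean (\<lambda>p. c * f p) = c * mean f"
  unfolding mean_def by simp

lemma mean_const: "mean (\<lambda>_. c) = c"
  unfolding mean_def by (subst set_integral_const) (auto simp: scaleR_conv_of_real)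

lemma rmean_add:
  "set_integrable lborel {0..<2*pi} f \<Longrightarrow> set_integrable lborel {0..<2*pi} g \<Longrightarrow>
   rmean (\<lambda>p. f p + g p) = rmean f + rmean g"
  unfolding rmean_def by (simp add: algebra_simps)

lemma rmean_cmult: "rmean (\<lambda>p. c * f p) = c * rmean f"
  unfolding rmean_def by simp

lemma rmean_nonneg: "(\<And>p. 0 \<le> f p) \<Longrightarrow> 0 \<le> rmean f"
  unfolding rmean_def set_lebesgue_integral_def
  by (intro mult_nonneg_nonneg integral_nonneg_AE) auto

text \<open>Pythagoras in \<open>L\<^sup>2\<close> of the period: a constant is orthogonal to every mean-zero function.\<close>

lemma rmean_const_plus_mean_zero:
  assumes "sqint g" "mean g = 0"
  shows "rmean (\<lambda>p. (cmod (c + g p))\<^sup>2) = (cmod c)\<^sup>2 + rmean (\<lambda>p. (cmod (g p))\<^sup>2)"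
proof -
  have g: "set_integrable lborel {0..<2*pi} g" by (rule sqint_integrable[OF assms(1)])
  have g2: "set_integrable lborel {0..<2*pi} (\<lambda>p. (cmod (g p))\<^sup>2)"
    using assms(1) unfolding sqint_def by simp
  have cg: "integrable lborel (\<lambda>p. indicator {0..<2*pi} p *\<^sub>R (cnj c * g p))"
    using set_integrable_mult_right[OF g, of "cnj c"] unfolding set_integrable_def .
  have "integrable lborel (\<lambda>p. Re (indicator {0..<2*pi} p *\<^sub>R (cnj c * g p)))"
    by (rule integrable_Re[OF cg])
  then have cross: "set_integrable lborel {0..<2*pi} (\<lambda>p. Re (cnj c * g p))"
    unfolding set_integrable_def by simp
  have "(LINT p:{0..<2*pi}|lborel. Re (cnj c * g p))
      = (\<integral>p. Re (indicator {0..<2*pi} p *\<^sub>R (cnj c * g p)) \<partial>lborel)"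
    unfolding set_lebesgue_integral_def by (intro Bochner_Integration.integral_cong) auto
  also have "\<dots> = Re (LINT p:{0..<2*pi}|lborel. cnj c * g p)"
    unfolding integral_Re[OF cg] set_lebesgue_integral_def ..
  also have "\<dots> = Re (cnj c * (LINT p:{0..<2*pi}|lborel. g p))"
    by simp
  also have "\<dots> = 0" using assms(2) unfolding mean_def by simp
  finally have cross0: "rmean (\<lambda>p. 2 * Re (cnj c * g p)) = 0"
    unfolding rmean_def by (simp only: set_integral_mult_right mult_zero_right)
  have expand: "(cmod (c + g p))\<^sup>2 = (cmod c)\<^sup>2 + ((cmod (g p))\<^sup>2 + 2 * Re (cnj c * g p))" for p
    unfolding cmod_power2 by (simp add: power2_eq_square algebra_simps)
  have "rmean (\<lambda>p. (cmod (c + g p))\<^sup>2)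
      = rmean (\<lambda>_. (cmod c)\<^sup>2) + rmean (\<lambda>p. (cmod (g p))\<^sup>2 + 2 * Re (cnj c * g p))"
    unfolding expand using cross g2
    by (intro rmean_add set_integral_add set_integrable_mult_right set_integrable_const_period)
  also have "\<dots> = (cmod c)\<^sup>2 + rmean (\<lambda>p. (cmod (g p))\<^sup>2)"
    using cross g2 cross0 unfolding rmean_add[OF g2 set_integrable_mult_right[OF cross]]
    unfolding rmean_def by (subst set_integral_const) auto
  finally show ?thesis .
qed

text \<open>Jensen's inequality \<open>|mean g|\<^sup>2 \<le> mean |g|\<^sup>2\<close>, obtained from Pythagoras applied to \<open>g - mean g\<close>.\<close>

lemma mean_norm_sq_le:
  assumes "sqint g"
  shows "(cmod (mean g))\<^sup>2 \<le> rmean (\<lambda>p. (cmod (g p))\<^sup>2)"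
proof -
  define h where "h = (\<lambda>p. 1 * g p + (-1) * mean g)"
  have h: "sqint h" unfolding h_def by (intro sqint_lin assms sqint_const)
  have "mean h = 0" unfolding h_def by (subst mean_lin) (auto simp: assms sqint_const mean_const)
  then have "rmean (\<lambda>p. (cmod (mean g + h p))\<^sup>2) = (cmod (mean g))\<^sup>2 + rmean (\<lambda>p. (cmod (h p))\<^sup>2)"
    by (rule rmean_const_plus_mean_zero[OF h])
  moreover have "(\<lambda>p. (cmod (mean g + h p))\<^sup>2) = (\<lambda>p. (cmod (g p))\<^sup>2)" unfolding h_def by simp
  ultimately show ?thesis using rmean_nonneg[of "\<lambda>p. (cmod (h p))\<^sup>2"] by simp
qed

lemma mean_cis_zero:
  fixes k :: real
  assumes "k \<noteq> 0" "k \<in> \<int>"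
  shows "mean (\<lambda>p. cis (k * p)) = 0"
proof -
  have "(LINT p:{0..<2*pi}|lborel. cis (k * p)) = (LINT p:{0..2*pi}|lborel. cis (k * p))"
    by (rule set_integral_discrete_difference[where X="{2*pi}"]) auto
  also have "\<dots> = cis (k * (2*pi)) / (\<i>*k) - cis (k*0) / (\<i>*k)"
    unfolding set_lebesgue_integral_def
  proof (rule integral_FTC_atLeastAtMost)
    show "continuous_on {0..2*pi} (\<lambda>x. cis (k * x))"
      by (intro continuous_intros)
    show "((\<lambda>x. cis (k * x) / (\<i> * k)) has_vector_derivative cis (k * x)) (at x within {0..2*pi})" for x
      unfolding has_vector_derivative_def using assms(1)
      by (auto intro!: derivative_eq_intros ext simp: field_simps scaleR_conv_of_real)
  qed simp
  also have "cis (k * (2*pi)) = 1" using cis_multiple_2pi[OF assms(2)] by (simp add: mult_ac)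
  finally show ?thesis unfolding mean_def by simp
qed

section \<open>Two-by-two matrices\<close>

lemma triple_product_entry:
  fixes P X Q :: cmat
  shows "(P ** X ** Q) $ i $ j =
    (P$i$1 * Q$1$j) * X$1$1 + (P$i$1 * Q$2$j) * X$1$2 + (P$i$2 * Q$1$j) * X$2$1 + (P$i$2 * Q$2$j) * X$2$2"
  by (simp add: matrix_matrix_mult_def sum_2 algebra_simps)

lemma adj_entry: "adj M $ i $ j = cnj (M $ j $ i)"
  by (simp add: adj_def)

lemma adj_mult: "adj ((P::cmat) ** Q) = adj Q ** adj P"
  by (simp add: adj_def matrix_matrix_mult_def vec_eq_iff mult.commute)

definition hs_diag :: "cmat \<Rightarrow> real" where
  "hs_diag M = ((cmod (M$1$1))\<^sup>2 + (cmod (M$2$2))\<^sup>2) / 2"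

definition hs_off :: "cmat \<Rightarrow> real" where
  "hs_off M = ((cmod (M$1$2))\<^sup>2 + (cmod (M$2$1))\<^sup>2) / 2"

definition hs :: "cmat \<Rightarrow> real" where
  "hs M = hs_diag M + hs_off M"

lemma hs_nonneg: "0 \<le> hs_diag M" "0 \<le> hs_off M" "0 \<le> hs M"
  unfolding hs_def hs_diag_def hs_off_def by auto

lemma hs_eq_trace: "(1/2) * mtrace (adj M ** M) = complex_of_real (hs M)"
proof -
  have cnj_mult_self: "cnj z * z = complex_of_real ((cmod z)\<^sup>2)" for z
    by (subst mult.commute) (simp only: complex_norm_square[symmetric])
  have "mtrace (adj M ** M) = (\<Sum>i\<in>UNIV. \<Sum>k\<in>UNIV. cnj (M$k$i) * M$k$i)"
    by (simp add: mtrace_def matrix_matrix_mult_def adj_entry)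
  also have "\<dots> = complex_of_real ((cmod (M$1$1))\<^sup>2 + (cmod (M$1$2))\<^sup>2 + (cmod (M$2$1))\<^sup>2 + (cmod (M$2$2))\<^sup>2)"
    by (simp add: sum_2 cnj_mult_self)
  finally show ?thesis unfolding hs_def hs_diag_def hs_off_def by (simp add: field_simps)
qed

lemma Had_entry: "Had$1$1 = 1 / complex_of_real (sqrt 2)" "Had$1$2 = 1 / complex_of_real (sqrt 2)"
  "Had$2$1 = 1 / complex_of_real (sqrt 2)" "Had$2$2 = - 1 / complex_of_real (sqrt 2)"
  by (simp_all add: Had_def)

lemma adj_Had: "adj Had = Had"
  unfolding adj_def Had_def vec_eq_iff using exhaust_2 by auto

lemma Had_conj_entry:
  "(Had ** Y ** Had) $1$1 = (Y$1$1 + Y$1$2 + Y$2$1 + Y$2$2) / 2"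
  "(Had ** Y ** Had) $1$2 = (Y$1$1 - Y$1$2 + Y$2$1 - Y$2$2) / 2"
  "(Had ** Y ** Had) $2$1 = (Y$1$1 + Y$1$2 - Y$2$1 - Y$2$2) / 2"
  "(Had ** Y ** Had) $2$2 = (Y$1$1 - Y$1$2 - Y$2$1 + Y$2$2) / 2"
  using of_real_mult[of "sqrt 2" "sqrt 2", symmetric, where 'a=complex]
  unfolding triple_product_entry Had_entry by (simp_all add: field_simps)

lemma hs_Had_conj: "hs (Had ** Y ** Had) = hs Y"
proof -
  have parallelogram: "(cmod ((a+b+c+d)/2))\<^sup>2 + (cmod ((a-b+c-d)/2))\<^sup>2 + (cmod ((a+b-c-d)/2))\<^sup>2
      + (cmod ((a-b-c+d)/2))\<^sup>2 = (cmod a)\<^sup>2 + (cmod b)\<^sup>2 + (cmod c)\<^sup>2 + (cmod d)\<^sup>2" for a b c d :: complex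
    unfolding cmod_power2 by (simp add: power2_eq_square field_simps)
  show ?thesis
    using parallelogram[of "Y$1$1" "Y$1$2" "Y$2$1" "Y$2$2"]
    unfolding hs_def hs_diag_def hs_off_def Had_conj_entry by (simp only: add_divide_distrib[symmetric] ac_simps)
qed

lemma hs_diag_Had_conj_traceless:
  assumes "Y$1$1 + Y$2$2 = 0"
  shows "hs_diag (Had ** Y ** Had) \<le> hs_off Y"
proof -
  have "Y$2$2 = - Y$1$1" using assms by (simp add: eq_neg_iff_add_eq_0 add.commute)
  then have "hs_diag (Had ** Y ** Had) = (cmod (Y$1$2 + Y$2$1))\<^sup>2 / 4"
    unfolding hs_diag_def Had_conj_entry
    by (simp add: norm_divide power_divide norm_minus_commute algebra_simps)
  also have "\<dots> \<le> hs_off Y"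
    using power_mono[OF norm_triangle_ineq[of "Y$1$2" "Y$2$1"], of 2]
      sum_power2_ge_zero[of "cmod (Y$1$2) - cmod (Y$2$1)" 0]
    unfolding hs_off_def by (simp add: power2_eq_square algebra_simps)
  finally show ?thesis .
qed

definition dg :: "complex \<Rightarrow> complex \<Rightarrow> cmat" where
  "dg a b = (\<chi> i j. if i = j then (if i = 1 then a else b) else 0)"

lemma dg_entry [simp]: "dg a b $1$1 = a" "dg a b $1$2 = 0" "dg a b $2$1 = 0" "dg a b $2$2 = b"
  by (simp_all add: dg_def)

lemma dg_conj_entry: "(adj (dg a b) ** M ** dg a b) $ i $ j = cnj (dg a b $ i $ i) * M$i$j * dg a b $ j $ j"
  using exhaust_2[of i] exhaust_2[of j] by (auto simp: triple_product_entry adj_entry)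

lemma hs_dg_conj:
  assumes "cmod a = r" "cmod b = r"
  shows "hs (adj (dg a b) ** M ** dg a b) = r^4 * hs M"
  unfolding hs_def hs_diag_def hs_off_def dg_conj_entry using assms
  by (simp add: norm_mult power_mult_distrib field_simps)

lemma hs_dg_Had_conj:
  assumes "cmod a = r" "cmod b = r"
  shows "hs (adj (dg a b ** Had) ** X ** (dg a b ** Had)) = r^4 * hs X"
proof -
  have "adj (dg a b ** Had) ** X ** (dg a b ** Had) = Had ** (adj (dg a b) ** X ** dg a b) ** Had"
    unfolding adj_mult adj_Had by (simp add: matrix_mul_assoc)
  then show ?thesis using hs_Had_conj hs_dg_conj[OF assms] by simp
qed

text \<open>Multiplying the off-diagonal entries by \<open>cnj m\<close> and \<open>m\<close>: this is what averaging the
  conjugation by the random phase \<open>e\<^sup>i\<^sup>\<phi>\<^sup>\<sigma>\<^sup>z\<close> does.\<close>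

definition offdiag_damp :: "complex \<Rightarrow> cmat \<Rightarrow> cmat" where
  "offdiag_damp m B = (\<chi> k l. (if k = l then 1 else if k = 1 then cnj m else m) * B $ k $ l)"

lemma offdiag_damp_entry [simp]:
  "offdiag_damp m B $1$1 = B$1$1" "offdiag_damp m B $2$2 = B$2$2"
  "offdiag_damp m B $1$2 = cnj m * B$1$2" "offdiag_damp m B $2$1 = m * B$2$1"
  by (simp_all add: offdiag_damp_def)

lemma hs_offdiag_damp:
  "hs_diag (offdiag_damp m B) = hs_diag B" "hs_off (offdiag_damp m B) = (cmod m)\<^sup>2 * hs_off B"
  unfolding hs_diag_def hs_off_def by (simp_all add: norm_mult power_mult_distrib field_simps)

section \<open>Matrix-valued functions on the period\<close>

definition allsq :: "(real \<Rightarrow> cmat) \<Rightarrow> bool" where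
  "allsq A \<longleftrightarrow> (\<forall>i j. sqint (\<lambda>p. A p $ i $ j))"

definition nrm2 :: "(real \<Rightarrow> cmat) \<Rightarrow> real" where
  "nrm2 A = rmean (\<lambda>p. hs (A p))"

lemma inT_iff_allsq: "inT A \<longleftrightarrow> allsq A"
  unfolding inT_def allsq_def sqint_def by auto

lemma Tnorm_eq: "Tnorm A = sqrt (nrm2 A)"
proof -
  have "Tinner A A = complex_of_real (1 / (2*pi)) * (LINT p:{0..<2*pi}|lborel. complex_of_real (hs (A p)))"
    unfolding Tinner_def hs_eq_trace by simp
  also have "\<dots> = complex_of_real (nrm2 A)"
    unfolding set_integral_complex_of_real nrm2_def rmean_def by simp
  finally show ?thesis unfolding Tnorm_def by simp
qed

lemma nrm2_nonneg: "0 \<le> nrm2 A"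
  unfolding nrm2_def by (intro rmean_nonneg hs_nonneg)

lemma nrm2_entries:
  assumes "allsq A"
  shows "nrm2 A = (rmean (\<lambda>p. (cmod (A p $1$1))\<^sup>2) + rmean (\<lambda>p. (cmod (A p $1$2))\<^sup>2)
     + rmean (\<lambda>p. (cmod (A p $2$1))\<^sup>2) + rmean (\<lambda>p. (cmod (A p $2$2))\<^sup>2)) / 2"
proof -
  have i: "set_integrable lborel {0..<2*pi} (\<lambda>p. (cmod (A p $i$j))\<^sup>2)" for i j
    using assms unfolding allsq_def sqint_def by auto
  have "hs (A p) = (1/2) * ((cmod (A p $1$1))\<^sup>2 + (cmod (A p $1$2))\<^sup>2
      + (cmod (A p $2$1))\<^sup>2 + (cmod (A p $2$2))\<^sup>2)" for p
    unfolding hs_def hs_diag_def hs_off_def by (simp add: field_simps)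
  then have "nrm2 A = (1/2) * rmean (\<lambda>p. (cmod (A p $1$1))\<^sup>2 + (cmod (A p $1$2))\<^sup>2
      + (cmod (A p $2$1))\<^sup>2 + (cmod (A p $2$2))\<^sup>2)"
    unfolding nrm2_def by (simp only: rmean_cmult)
  also have "\<dots> = (1/2) * (rmean (\<lambda>p. (cmod (A p $1$1))\<^sup>2) + rmean (\<lambda>p. (cmod (A p $1$2))\<^sup>2)
     + rmean (\<lambda>p. (cmod (A p $2$1))\<^sup>2) + rmean (\<lambda>p. (cmod (A p $2$2))\<^sup>2))"
    by (simp add: rmean_add set_integral_add i)
  finally show ?thesis by simp
qed

lemma zero_mode_entry: "zero_mode A $ i $ j = mean (\<lambda>p. A p $ i $ j)"
  unfolding zero_mode_def mean_def by simp

lemma allsq_triple_product: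
  fixes P Q :: cmat
  shows "allsq X \<Longrightarrow> allsq (\<lambda>p. P ** X p ** Q)"
  unfolding allsq_def triple_product_entry by (auto intro!: sqint_add sqint_cmult)

lemma mean_triple_product:
  fixes P Q :: cmat
  assumes "allsq X"
  shows "mean (\<lambda>p. (P ** X p ** Q) $ i $ j) = (P ** (\<chi> k l. mean (\<lambda>p. X p $ k $ l)) ** Q) $ i $ j"
  using assms unfolding triple_product_entry allsq_def
  by (simp add: mean_add mean_cmult sqint_add sqint_cmult)

definition fluct :: "(real \<Rightarrow> cmat) \<Rightarrow> real \<Rightarrow> cmat" where
  "fluct A = (\<lambda>p. A p - zero_mode A)"

lemma fluct_allsq_mean_zero:
  assumes "allsq A"
  shows "allsq (fluct A)" "mean (\<lambda>p. fluct A p $ i $ j) = 0"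
proof -
  have e: "fluct A p $ k $ l = 1 * A p $ k $ l + (-1) * zero_mode A $ k $ l" for p k l
    unfolding fluct_def by simp
  show "allsq (fluct A)"
    using assms unfolding allsq_def e by (intro allI sqint_lin sqint_const) auto
  show "mean (\<lambda>p. fluct A p $ i $ j) = 0"
    using assms unfolding allsq_def e
    by (subst mean_lin) (auto simp: sqint_const mean_const zero_mode_entry)
qed

lemma nrm2_const_plus_mean_zero:
  assumes "allsq X" "\<And>i j. mean (\<lambda>p. X p $ i $ j) = 0"
  shows "nrm2 (\<lambda>p. C + X p) = hs C + nrm2 X"
proof -
  have X: "sqint (\<lambda>p. X p $ i $ j)" for i j using assms(1) unfolding allsq_def by auto
  have CX: "allsq (\<lambda>p. C + X p)"
    unfolding allsq_def by (auto intro!: sqint_add sqint_const X)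
  show ?thesis
    unfolding nrm2_entries[OF assms(1)] nrm2_entries[OF CX] vector_add_component
      rmean_const_plus_mean_zero[OF X assms(2)]
    unfolding hs_def hs_diag_def hs_off_def by (simp add: field_simps)
qed

lemma nrm2_decomp: "allsq A \<Longrightarrow> nrm2 A = hs (zero_mode A) + nrm2 (fluct A)"
  using nrm2_const_plus_mean_zero[OF fluct_allsq_mean_zero, of A "zero_mode A"]
  by (simp add: fluct_def)

lemma perp_one_traceless:
  assumes "allsq A" "Tinner Tone A = 0"
  shows "zero_mode A $1$1 + zero_mode A $2$2 = 0"
proof -
  have tr: "(1/2) * mtrace (adj (Tone p) ** A p) = (1/2) * (A p $1$1 + A p $2$2)" for p
    unfolding mtrace_def Tone_def by (simp add: sum_2 matrix_matrix_mult_def adj_entry idm_def)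
  have "sqint (\<lambda>p. A p $1$1)" "sqint (\<lambda>p. A p $2$2)"
    using assms(1) unfolding allsq_def by auto
  then have "mean (\<lambda>p. A p $1$1 + A p $2$2) = zero_mode A $1$1 + zero_mode A $2$2"
    unfolding zero_mode_entry by (rule mean_add)
  moreover have "Tinner Tone A = (1/2) * mean (\<lambda>p. A p $1$1 + A p $2$2)"
    unfolding Tinner_def tr mean_def by simp
  ultimately show ?thesis using assms(2) by simp
qed

section \<open>The shift\<close>

definition phase :: "real \<Rightarrow> cmat" where
  "phase \<phi> = dg (cis \<phi>) (cis (-\<phi>))"

definition pcorr :: "2 \<Rightarrow> 2 \<Rightarrow> real \<Rightarrow> complex" where
  "pcorr i j \<phi> = cnj (phase \<phi> $ i $ i) * phase \<phi> $ j $ j"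

lemma pcorr_values:
  "pcorr 1 1 \<phi> = 1" "pcorr 2 2 \<phi> = 1" "pcorr 1 2 \<phi> = cis (-2 * \<phi>)" "pcorr 2 1 \<phi> = cis (2 * \<phi>)"
  unfolding pcorr_def phase_def by (simp_all add: cis_cnj cis_mult)

lemma pcorr_diag: "pcorr i i \<phi> = 1"
  using exhaust_2[of i] pcorr_values by auto

lemma pcorr_continuous: "continuous_on UNIV (pcorr i j)"
  unfolding pcorr_def phase_def dg_def
  by (cases "i = 1"; cases "j = 1") (auto intro!: continuous_intros)

lemma pcorr_measurable: "pcorr i j \<in> borel_measurable borel"
  by (rule borel_measurable_continuous_onI[OF pcorr_continuous])

lemma pcorr_norm: "cmod (pcorr i j \<phi>) = 1"
  unfolding pcorr_def phase_def dg_def by (auto simp: norm_mult)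

lemma sqint_pcorr: "sqint (pcorr i j)"
  unfolding sqint_def using pcorr_measurable by (simp add: pcorr_norm set_integrable_const_period)

lemma mean_pcorr_off: "i \<noteq> j \<Longrightarrow> mean (pcorr i j) = 0"
proof -
  have "pcorr 1 2 = (\<lambda>p. cis (-2 * p))" "pcorr 2 1 = (\<lambda>p. cis (2 * p))"
    by (auto simp: pcorr_values)
  moreover assume "i \<noteq> j"
  ultimately show ?thesis
    using exhaust_2[of i] exhaust_2[of j] mean_cis_zero[of 2] mean_cis_zero[of "-2"] by auto
qed

lemma phase_conj_entry: "(adj (phase \<phi>) ** M ** phase \<phi>) $ i $ j = pcorr i j \<phi> * M $ i $ j"
  unfolding pcorr_def phase_def dg_conj_entry by (simp add: algebra_simps)

lemma Smat_phase: "Smat p = phase p"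
  unfolding vec_eq_iff phase_def dg_def Smat_def shiftv_def using exhaust_2 by auto

text \<open>A function of the form \<open>S(p)\<^sup>* (B + Z(p)) S(p)\<close> with \<open>Z\<close> of mean zero, which is the shape
  of \<open>W(A)\<close>: its norm is \<open>\<parallel>B\<parallel>\<^sup>2 + \<parallel>Z\<parallel>\<^sup>2\<close>, its zero mode keeps the diagonal of \<open>B\<close>, and
  since the shift turns the off-diagonal of \<open>B\<close> into a nonconstant Fourier mode, the
  off-diagonal of its zero mode comes from \<open>Z\<close> alone.\<close>

definition shifted :: "cmat \<Rightarrow> (real \<Rightarrow> cmat) \<Rightarrow> real \<Rightarrow> cmat" where
  "shifted B Z = (\<lambda>p. adj (Smat p) ** (B + Z p) ** Smat p)"

lemma shifted_entry: "shifted B Z p $ i $ j = pcorr i j p * (B $ i $ j + Z p $ i $ j)"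
  unfolding shifted_def Smat_phase phase_conj_entry by simp

lemma shifted_allsq: "allsq Z \<Longrightarrow> allsq (shifted B Z)"
  unfolding allsq_def shifted_entry
  by (auto intro!: sqint_unimodular_mult sqint_add sqint_const pcorr_measurable pcorr_norm)

lemma shifted_nrm2:
  assumes "allsq Z" "\<And>i j. mean (\<lambda>p. Z p $ i $ j) = 0"
  shows "nrm2 (shifted B Z) = hs B + nrm2 Z"
proof -
  have "hs (shifted B Z p) = hs (B + Z p)" for p
    using hs_dg_conj[of "cis p" 1 "cis (-p)" "B + Z p"] unfolding shifted_def Smat_phase phase_def by simp
  then have "nrm2 (shifted B Z) = nrm2 (\<lambda>p. B + Z p)"
    unfolding nrm2_def by simp
  also have "\<dots> = hs B + nrm2 Z"
    by (rule nrm2_const_plus_mean_zero[OF assms])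
  finally show ?thesis .
qed

lemma shifted_zero_mode:
  assumes "allsq Z" "\<And>i j. mean (\<lambda>p. Z p $ i $ j) = 0"
  shows "hs_diag (zero_mode (shifted B Z)) = hs_diag B"
    and "hs_off (zero_mode (shifted B Z)) \<le> nrm2 Z"
proof -
  have Z: "sqint (\<lambda>p. Z p $ i $ j)" for i j using assms(1) unfolding allsq_def by auto
  have "zero_mode (shifted B Z) $ i $ i = B $ i $ i" for i
    unfolding zero_mode_entry shifted_entry pcorr_diag
    by (simp add: mean_add sqint_const Z mean_const assms(2))
  then show "hs_diag (zero_mode (shifted B Z)) = hs_diag B"
    unfolding hs_diag_def by simp
  have off: "(cmod (zero_mode (shifted B Z) $ i $ j))\<^sup>2 \<le> rmean (\<lambda>p. (cmod (Z p $ i $ j))\<^sup>2)"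
    if "i \<noteq> j" for i j
  proof -
    have pZ: "sqint (\<lambda>p. pcorr i j p * Z p $ i $ j)"
      by (intro sqint_unimodular_mult Z pcorr_measurable pcorr_norm)
    have "zero_mode (shifted B Z) $ i $ j = mean (\<lambda>p. B $ i $ j * pcorr i j p + 1 * (pcorr i j p * Z p $ i $ j))"
      unfolding zero_mode_entry shifted_entry by (simp add: algebra_simps)
    also have "\<dots> = B $ i $ j * mean (pcorr i j) + 1 * mean (\<lambda>p. pcorr i j p * Z p $ i $ j)"
      by (rule mean_lin[OF sqint_pcorr pZ])
    also have "\<dots> = mean (\<lambda>p. pcorr i j p * Z p $ i $ j)"
      using mean_pcorr_off[OF that] by simp
    finally have "(cmod (zero_mode (shifted B Z) $ i $ j))\<^sup>2 \<le> rmean (\<lambda>p. (cmod (pcorr i j p * Z p $ i $ j))\<^sup>2)"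
      using mean_norm_sq_le[OF pZ] by simp
    then show ?thesis by (simp add: norm_mult pcorr_norm)
  qed
  show "hs_off (zero_mode (shifted B Z)) \<le> nrm2 Z"
    using off[of 1 2] off[of 2 1] rmean_nonneg[of "\<lambda>p. (cmod (Z p $ 1 $ 1))\<^sup>2"]
      rmean_nonneg[of "\<lambda>p. (cmod (Z p $ 2 $ 2))\<^sup>2"]
    unfolding hs_off_def nrm2_entries[OF assms(1)] by simp
qed

section \<open>The walk on \<open>\<T>\<close>\<close>

lemma Wop_shifted:
  "Wop \<nu> A = shifted (Tch \<nu> (zero_mode A)) (\<lambda>p. adj (Uavg \<nu>) ** fluct A p ** Uavg \<nu>)"
  unfolding Wop_def shifted_def fluct_def ..

lemma conj_fluct:
  fixes P Q :: cmat
  assumes "allsq A"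
  shows "allsq (\<lambda>p. P ** fluct A p ** Q)" "mean (\<lambda>p. (P ** fluct A p ** Q) $ i $ j) = 0"
proof -
  note F = fluct_allsq_mean_zero[OF assms]
  show "allsq (\<lambda>p. P ** fluct A p ** Q)" by (rule allsq_triple_product[OF F(1)])
  have "mean (\<lambda>p. (P ** fluct A p ** Q) $ i $ j) = (P ** (\<chi> k l. 0) ** Q) $ i $ j"
    unfolding mean_triple_product[OF F(1)] F(2) ..
  then show "mean (\<lambda>p. (P ** fluct A p ** Q) $ i $ j) = 0"
    by (simp add: triple_product_entry)
qed

lemma walk_step:
  assumes U: "Uavg \<nu> = dg a b ** Had" "cmod a = r" "cmod b = r" and A: "allsq A"
  shows "allsq (Wop \<nu> A)"
    and "nrm2 (Wop \<nu> A) = hs (Tch \<nu> (zero_mode A)) + r^4 * nrm2 (fluct A)"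
    and "hs (zero_mode (Wop \<nu> A)) \<le> hs_diag (Tch \<nu> (zero_mode A)) + r^4 * nrm2 (fluct A)"
proof -
  define Z where "Z = (\<lambda>p. adj (Uavg \<nu>) ** fluct A p ** Uavg \<nu>)"
  have Z: "allsq Z" "\<And>i j. mean (\<lambda>p. Z p $ i $ j) = 0"
    unfolding Z_def using conj_fluct[OF A] by auto
  have nrm2_Z: "nrm2 Z = r^4 * nrm2 (fluct A)"
    unfolding nrm2_def Z_def U(1) hs_dg_Had_conj[OF U(2,3)] rmean_cmult ..
  show "allsq (Wop \<nu> A)"
    unfolding Wop_shifted by (rule shifted_allsq[OF Z(1)[unfolded Z_def]])
  show "nrm2 (Wop \<nu> A) = hs (Tch \<nu> (zero_mode A)) + r^4 * nrm2 (fluct A)"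
    unfolding Wop_shifted Z_def[symmetric] shifted_nrm2[OF Z] nrm2_Z ..
  show "hs (zero_mode (Wop \<nu> A)) \<le> hs_diag (Tch \<nu> (zero_mode A)) + r^4 * nrm2 (fluct A)"
    using shifted_zero_mode[OF Z] unfolding Wop_shifted Z_def[symmetric] hs_def nrm2_Z by simp
qed

text \<open>Write \<open>\<parallel>A\<parallel>\<^sup>2 = a + s + y\<close> with \<open>a, s\<close> the diagonal and off-diagonal
  parts of \<open>A\<^sub>0\<close> and \<open>y = \<parallel>A - A\<^sub>0\<parallel>\<^sup>2\<close>. The first step gives \<open>\<parallel>Q\<parallel>\<^sup>2 = a + |m|\<^sup>2 s + r\<^sup>4 y\<close>, and,
  \<open>A\<^sub>0\<close> being traceless, a zero mode \<open>\<parallel>Q\<^sub>0\<parallel>\<^sup>2 \<le> |m|\<^sup>2 s + r\<^sup>4 y\<close>; the undamped diagonal part \<open>a\<close> has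
  become fluctuation of \<open>Q\<close> and is damped by \<open>r\<^sup>4\<close> in the second step.\<close>

lemma walk_two_steps:
  assumes U: "Uavg \<nu> = dg a b ** Had" "cmod a = r" "cmod b = r" "r \<le> 1"
    and T: "\<And>B. Tch \<nu> B = Had ** offdiag_damp m B ** Had" "cmod m \<le> 1"
    and A: "allsq A" "zero_mode A $1$1 + zero_mode A $2$2 = 0"
  shows "nrm2 (Wop \<nu> (Wop \<nu> A)) \<le> max (r^4) ((cmod m)\<^sup>2) * nrm2 A"
proof -
  define R where "R = r^4"
  define q where "q = (cmod m)\<^sup>2"
  define A0 where "A0 = zero_mode A"
  define Q where "Q = Wop \<nu> A"
  define y where "y = nrm2 (fluct A)"
  have R: "0 \<le> R" "R \<le> 1" unfolding R_def using U(2) U(4) norm_ge_zero[of a]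
    by (auto intro: power_le_one)
  have q: "q \<le> 1" unfolding q_def using T(2) norm_ge_zero[of m] by (simp add: power_le_one)
  have T_hs: "hs (Tch \<nu> B) = hs_diag B + q * hs_off B" for B
    unfolding T(1) hs_Had_conj by (simp add: hs_def hs_offdiag_damp q_def)
  have T_contr: "hs (Tch \<nu> B) \<le> hs B" for B
    using T_hs[of B] mult_left_le_one_le[OF hs_nonneg(2) _ q, of B] unfolding hs_def q_def by simp
  have T_diag: "hs_diag (Tch \<nu> A0) \<le> q * hs_off A0"
    using hs_diag_Had_conj_traceless[of "offdiag_damp m A0"] A(2)
    unfolding T(1) hs_offdiag_damp A0_def q_def by simp
  note step1 = walk_step[OF U(1-3) A(1), folded R_def A0_def Q_def y_def]
  note step2 = walk_step[OF U(1-3) step1(1), folded R_def]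
  have "nrm2 (Wop \<nu> Q) = hs (Tch \<nu> (zero_mode Q)) + R * nrm2 (fluct Q)"
    by (rule step2(2))
  also have "\<dots> \<le> hs (zero_mode Q) + R * (nrm2 Q - hs (zero_mode Q))"
    using T_contr nrm2_decomp[OF step1(1)] by simp
  also have "\<dots> = (1 - R) * hs (zero_mode Q) + R * nrm2 Q"
    by (simp add: algebra_simps)
  also have "\<dots> \<le> (1 - R) * (q * hs_off A0 + R * y) + R * nrm2 Q"
    using step1(3) T_diag R by (intro add_right_mono mult_left_mono) auto
  also have "\<dots> = R * hs_diag A0 + q * hs_off A0 + R * y"
    unfolding step1(2) T_hs by (simp add: algebra_simps)
  also have "\<dots> \<le> max R q * (hs_diag A0 + hs_off A0 + y)"
    using hs_nonneg[of A0] nrm2_nonneg[of "fluct A"] unfolding y_def distrib_left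
    by (intro add_mono mult_right_mono) auto
  also have "\<dots> = max R q * nrm2 A"
    unfolding nrm2_decomp[OF A(1)] A0_def y_def hs_def ..
  finally show ?thesis unfolding Q_def R_def q_def .
qed

section \<open>The coins \<open>H\<^sub>\<phi> = e\<^sup>i\<^sup>\<phi>\<^sup>\<sigma>\<^sup>z H\<close>\<close>

lemma dg_mult_entry: "(dg a b ** M) $ i $ j = dg a b $ i $ i * M $ i $ j"
  using exhaust_2[of i] by (auto simp: matrix_matrix_mult_def sum_2)

lemma Hphi_phase: "Hphi \<phi> = phase \<phi> ** Had"
proof -
  have "(\<chi> i j. if i = j then cis (\<phi> * Re (sigz $ i $ i)) else 0) = phase \<phi>"
    unfolding vec_eq_iff phase_def dg_def sigz_def using exhaust_2 by auto
  then show ?thesis unfolding Hphi_def by simp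
qed

lemma phase_diag_continuous: "continuous_on UNIV (\<lambda>\<phi>. phase \<phi> $ i $ i)"
  unfolding phase_def dg_def by (cases "i = 1") (auto intro!: continuous_intros)

lemma Hphi_measurable: "Hphi \<in> borel_measurable borel"
proof -
  have entries: "Hphi = (\<lambda>\<phi>. \<chi> i j. phase \<phi> $ i $ i * Had $ i $ j)"
    unfolding Hphi_phase phase_def dg_mult_entry[symmetric] by (simp add: vec_eq_iff)
  show ?thesis
    unfolding entries by (intro borel_measurable_continuous_onI continuous_intros phase_diag_continuous)
qed

lemma Hphi_conj: "adj (Hphi \<phi>) ** B ** Hphi \<phi> = Had ** (adj (phase \<phi>) ** B ** phase \<phi>) ** Had"
  unfolding Hphi_phase adj_mult adj_Had by (simp add: matrix_mul_assoc)

lemma integral_coin_law: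
  fixes g :: "cmat \<Rightarrow> complex"
  assumes "sets \<mu> = sets borel" "g \<in> borel_measurable borel"
  shows "(\<integral>U. g U \<partial>distr \<mu> borel Hphi) = (\<integral>\<phi>. g (Hphi \<phi>) \<partial>\<mu>)"
proof (rule integral_distr[OF _ assms(2)])
  show "Hphi \<in> borel_measurable \<mu>"
    unfolding measurable_cong_sets[OF assms(1) refl] by (rule Hphi_measurable)
qed

lemma bounded_integrable:
  assumes "prob_space \<mu>" "sets \<mu> = sets borel" "g \<in> borel_measurable borel" "\<And>x. norm (g x) \<le> C"
  shows "integrable \<mu> (g :: real \<Rightarrow> complex)"
proof -
  interpret prob_space \<mu> by fact
  have "g \<in> borel_measurable \<mu>"
    unfolding measurable_cong_sets[OF assms(2) refl] by (rule assms(3))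
  then show ?thesis using assms(4) by (intro integrable_const_bound[where B=C]) auto
qed

lemma integral_triple_product:
  fixes P Q :: cmat
  assumes "\<And>k l. integrable \<mu> (\<lambda>\<phi>. X \<phi> $ k $ l)"
  shows "(\<integral>\<phi>. (P ** X \<phi> ** Q) $ i $ j \<partial>\<mu>) = (P ** (\<chi> k l. \<integral>\<phi>. X \<phi> $ k $ l \<partial>\<mu>) ** Q) $ i $ j"
  unfolding triple_product_entry by (simp add: assms)

lemma entry_measurable: "(\<lambda>U::cmat. U $ i $ j) \<in> borel_measurable borel"
  by (intro borel_measurable_continuous_onI continuous_intros continuous_on_id)

lemma conj_entry_measurable: "(\<lambda>U::cmat. (adj U ** B ** U) $ i $ j) \<in> borel_measurable borel"
  unfolding triple_product_entry adj_entry
  by (intro borel_measurable_continuous_onI continuous_intros continuous_on_id)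

lemma coin_Uavg:
  assumes "prob_space \<mu>" "sets \<mu> = sets borel"
  shows "Uavg (distr \<mu> borel Hphi) = dg (\<integral>\<phi>. cis \<phi> \<partial>\<mu>) (cnj (\<integral>\<phi>. cis \<phi> \<partial>\<mu>)) ** Had"
proof -
  have "(\<integral>\<phi>. Hphi \<phi> $ i $ j \<partial>\<mu>) = (\<integral>\<phi>. phase \<phi> $ i $ i \<partial>\<mu>) * Had $ i $ j" for i j
    unfolding Hphi_phase phase_def dg_mult_entry by simp
  moreover have "(\<integral>\<phi>. phase \<phi> $ i $ i \<partial>\<mu>) = dg (\<integral>\<phi>. cis \<phi> \<partial>\<mu>) (cnj (\<integral>\<phi>. cis \<phi> \<partial>\<mu>)) $ i $ i" for i
    using exhaust_2[of i] by (auto simp: phase_def cis_cnj[symmetric])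
  ultimately show ?thesis
    unfolding Uavg_def integral_coin_law[OF assms(2) entry_measurable] vec_eq_iff dg_mult_entry
    by simp
qed

lemma coin_Tch:
  assumes "prob_space \<mu>" "sets \<mu> = sets borel"
  shows "Tch (distr \<mu> borel Hphi) B = Had ** offdiag_damp (\<integral>\<phi>. cis (2 * \<phi>) \<partial>\<mu>) B ** Had"
proof -
  interpret prob_space \<mu> by fact
  have pcorr_int: "integrable \<mu> (\<lambda>\<phi>. pcorr k l \<phi> * c)" for k l c
    by (rule bounded_integrable[OF assms, where C="cmod c"])
      (auto simp: norm_mult pcorr_norm intro!: borel_measurable_times pcorr_measurable)
  have "(\<integral>\<phi>. pcorr k l \<phi> * B $ k $ l \<partial>\<mu>) = offdiag_damp (\<integral>\<phi>. cis (2 * \<phi>) \<partial>\<mu>) B $ k $ l" for k l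
    using exhaust_2[of k] exhaust_2[of l]
    by (auto simp: pcorr_values prob_space cis_cnj[symmetric])
  then have "(\<chi> k l. \<integral>\<phi>. (adj (phase \<phi>) ** B ** phase \<phi>) $ k $ l \<partial>\<mu>)
      = offdiag_damp (\<integral>\<phi>. cis (2 * \<phi>) \<partial>\<mu>) B"
    unfolding phase_conj_entry by (simp add: vec_eq_iff)
  moreover have "(\<integral>\<phi>. (adj (Hphi \<phi>) ** B ** Hphi \<phi>) $ i $ j \<partial>\<mu>)
      = (Had ** (\<chi> k l. \<integral>\<phi>. (adj (phase \<phi>) ** B ** phase \<phi>) $ k $ l \<partial>\<mu>) ** Had) $ i $ j" for i j
    unfolding Hphi_conj by (rule integral_triple_product) (simp add: phase_conj_entry pcorr_int)
  ultimately show ?thesis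
    unfolding Tch_def integral_coin_law[OF assms(2) conj_entry_measurable] vec_eq_iff by simp
qed

theorem lemma2:
  fixes \<mu> :: "real measure"
  assumes "prob_space \<mu>"
    and "sets \<mu> = sets borel"
    and "measure \<mu> {-pi..<pi} = 1"
    and "cmod (\<integral>\<phi>. cis (1 * \<phi>) \<partial>\<mu>) < 1"
    and "cmod (\<integral>\<phi>. cis (2 * \<phi>) \<partial>\<mu>) < 1"
  shows "strictly_contractive_perp (Wop (distr \<mu> borel Hphi) \<circ> Wop (distr \<mu> borel Hphi))"
proof -
  define \<nu> where "\<nu> = distr \<mu> borel Hphi"
  define m1 where "m1 = (\<integral>\<phi>. cis \<phi> \<partial>\<mu>)"
  define m2 where "m2 = (\<integral>\<phi>. cis (2 * \<phi>) \<partial>\<mu>)"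
  define c where "c = max ((cmod m1)^4) ((cmod m2)\<^sup>2)"
  have "cmod m1 < 1" "cmod m2 < 1" using assms(4,5) unfolding m1_def m2_def by simp_all
  then have c: "c < 1" unfolding c_def by (simp add: power_less_one_iff)
  have two_steps: "nrm2 (Wop \<nu> (Wop \<nu> A)) \<le> c * nrm2 A" if "inT A" "Tinner Tone A = 0" for A
    unfolding c_def
  proof (rule walk_two_steps)
    show "Uavg \<nu> = dg m1 (cnj m1) ** Had" unfolding \<nu>_def m1_def by (rule coin_Uavg[OF assms(1,2)])
    show "Tch \<nu> B = Had ** offdiag_damp m2 B ** Had" for B
      unfolding \<nu>_def m2_def by (rule coin_Tch[OF assms(1,2)])
    show "allsq A" using that(1) by (simp add: inT_iff_allsq)
    then show "zero_mode A $1$1 + zero_mode A $2$2 = 0" by (rule perp_one_traceless[OF _ that(2)])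
  qed (use \<open>cmod m1 < 1\<close> \<open>cmod m2 < 1\<close> in auto)
  show ?thesis
    unfolding strictly_contractive_perp_def \<nu>_def[symmetric]
  proof (intro exI[of _ "sqrt c"] conjI allI impI)
    show "sqrt c < 1" using c by simp
    show "Tnorm ((Wop \<nu> \<circ> Wop \<nu>) A) \<le> sqrt c * Tnorm A" if "inT A" "Tinner Tone A = 0" for A
      using two_steps[OF that] unfolding Tnorm_eq real_sqrt_mult[symmetric] by simp
  qed
qed

end
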